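(* Let $X$ be a non-empty set, $\alpha$ an equivalence relation on $X$, and $f,g\in\mathcal T_X(\alpha)$. Then in the semigroup $\mathcal T_X(\alpha)$: (i) $f\,\mathscr L\,g$ iff $\operatorname{im}(f)=\operatorname{im}(g)$; (ii) $f\,\mathscr R\,g$ iff $f=g$, or $\ker(f)=\ker(g)$ and $\alpha$ separates both $\operatorname{im}(f)$ and $\operatorname{im}(g)$; (iii) $f\,\mathscr H\,g$ iff $f=g$, or $\ker(f)=\ker(g)$ and $\alpha$ separates $\operatorname{im}(f)=\operatorname{im}(g)$; (iv) $f\,\mathscr D\,g$ iff $\operatorname{im}(f)=\operatorname{im}(g)$, or $\operatorname{rank}(f)=\operatorname{rank}(g)$ and $\alpha$ separates both $\operatorname{im}(f)$ and $\operatorname{im}(g)$; (v) $f\,\mathscr J\,g$ iff $\operatorname{im}(f)=\operatorname{im}(g)$ or $\|\alpha f^{-1}\|=\operatorname{rank}(f)=\operatorname{rank}(g)=\|\alpha g^{-1}\|$. Further, $\mathscr D=\mathscr J$ in $\mathcal T_X(\alpha)$ if and only if $\|\alpha\|$ is finite or $\alpha=\Delta$.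
   Context: $\mathcal T_X$ is the semigroup of all maps $X\to X$ (written on the right, composed left to right). $\mathcal T_X(\alpha)=\{f\in\mathcal T_X:\ker(f)\supseteq\alpha\}$, where $\ker(f)=\{(x,y):xf=yf\}$. $\operatorname{rank}(f)=|\operatorname{im}(f)|$. $\|\sigma\|$ denotes the number of classes of an equivalence $\sigma$; $\alpha f^{-1}=\{(x,y):(xf,yf)\in\alpha\}$; $\Delta=\{(x,x):x\in X\}$. An equivalence $\sigma$ separates a set $B$ if each $\sigma$-class contains at most one element of $B$. Green's relations are computed within $\mathcal T_X(\alpha)$. *)

theory Defs
  imports Main "HOL-Library.FuncSet" "HOL-Library.Equipollence"
begin

text \<open>Maps X to X are represented as extensional functions (undefined outside X).
  Composition is written on the right: x (f g) = (x f) g.\<close>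

definition tmult :: "'a set \<Rightarrow> ('a \<Rightarrow> 'a) \<Rightarrow> ('a \<Rightarrow> 'a) \<Rightarrow> ('a \<Rightarrow> 'a)" where
  "tmult X f g = compose X g f"

definition kernel :: "'a set \<Rightarrow> ('a \<Rightarrow> 'b) \<Rightarrow> ('a \<times> 'a) set" where
  "kernel X f = {(x, y). x \<in> X \<and> y \<in> X \<and> f x = f y}"

definition TXalpha :: "'a set \<Rightarrow> ('a \<times> 'a) set \<Rightarrow> ('a \<Rightarrow> 'a) set" where
  "TXalpha X \<alpha> = {f \<in> X \<rightarrow>\<^sub>E X. \<alpha> \<subseteq> kernel X f}"

definition preimage_rel :: "'a set \<Rightarrow> ('a \<times> 'a) set \<Rightarrow> ('a \<Rightarrow> 'a) \<Rightarrow> ('a \<times> 'a) set" where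
  "preimage_rel X \<alpha> f = {(x, y). x \<in> X \<and> y \<in> X \<and> (f x, f y) \<in> \<alpha>}"

definition separates :: "('a \<times> 'a) set \<Rightarrow> 'a set \<Rightarrow> bool" where
  "separates \<sigma> B \<longleftrightarrow> (\<forall>x\<in>B. \<forall>y\<in>B. (x, y) \<in> \<sigma> \<longrightarrow> x = y)"

text \<open>Green's relations in a semigroup S with multiplication m (via S^1).\<close>

definition greenL :: "'s set \<Rightarrow> ('s \<Rightarrow> 's \<Rightarrow> 's) \<Rightarrow> 's \<Rightarrow> 's \<Rightarrow> bool" where
  "greenL S m f g \<longleftrightarrow> f \<in> S \<and> g \<in> S \<and>
     (f = g \<or> (\<exists>s\<in>S. f = m s g)) \<and> (g = f \<or> (\<exists>t\<in>S. g = m t f))"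

definition greenR :: "'s set \<Rightarrow> ('s \<Rightarrow> 's \<Rightarrow> 's) \<Rightarrow> 's \<Rightarrow> 's \<Rightarrow> bool" where
  "greenR S m f g \<longleftrightarrow> f \<in> S \<and> g \<in> S \<and>
     (f = g \<or> (\<exists>s\<in>S. f = m g s)) \<and> (g = f \<or> (\<exists>t\<in>S. g = m f t))"

definition greenH :: "'s set \<Rightarrow> ('s \<Rightarrow> 's \<Rightarrow> 's) \<Rightarrow> 's \<Rightarrow> 's \<Rightarrow> bool" where
  "greenH S m f g \<longleftrightarrow> greenL S m f g \<and> greenR S m f g"

definition greenD :: "'s set \<Rightarrow> ('s \<Rightarrow> 's \<Rightarrow> 's) \<Rightarrow> 's \<Rightarrow> 's \<Rightarrow> bool" where
  "greenD S m f g \<longleftrightarrow> (\<exists>h\<in>S. greenL S m f h \<and> greenR S m h g)"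

definition in_ideal :: "'s set \<Rightarrow> ('s \<Rightarrow> 's \<Rightarrow> 's) \<Rightarrow> 's \<Rightarrow> 's \<Rightarrow> bool" where
  "in_ideal S m f g \<longleftrightarrow> f = g \<or> (\<exists>a\<in>S. f = m a g) \<or> (\<exists>b\<in>S. f = m g b)
     \<or> (\<exists>a\<in>S. \<exists>b\<in>S. f = m (m a g) b)"

definition greenJ :: "'s set \<Rightarrow> ('s \<Rightarrow> 's \<Rightarrow> 's) \<Rightarrow> 's \<Rightarrow> 's \<Rightarrow> bool" where
  "greenJ S m f g \<longleftrightarrow> f \<in> S \<and> g \<in> S \<and> in_ideal S m f g \<and> in_ideal S m g f"

end

theory Submission
  imports Defs
begin

text \<open>Two factorisation criteria drive everything. In \<open>T\<^sub>X(\<alpha>)\<close>, \<open>f = s g\<close> for some \<open>s\<close>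
  iff \<open>im f \<subseteq> im g\<close>, and \<open>f = k b\<close> for some \<open>b\<close> iff the pull-back \<open>\<alpha>k\<inverse>\<close> of \<open>\<alpha>\<close> along \<open>k\<close>
  is contained in \<open>ker f\<close>. The first gives \<open>\<L>\<close> at once. For \<open>\<R>\<close>, mutual divisibility yields
  \<open>ker f \<subseteq> \<alpha>f\<inverse> \<subseteq> ker g \<subseteq> \<alpha>g\<inverse> \<subseteq> ker f\<close>: equal kernels, and \<open>\<alpha>\<close> separates both images.
  Combining the criteria, \<open>f\<close> lies in the ideal generated by \<open>g\<close> iff \<open>im f \<subseteq> im g\<close> or
  \<open>|im f| \<le> |im g / \<alpha>|\<close>, the latter by embedding \<open>im f\<close> into a transversal of \<open>\<alpha>\<close> on
  \<open>im g\<close>; as \<open>|A / \<alpha>| \<le> |A|\<close> always, mutual inclusion of ideals with distinct images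
  means \<open>|im f / \<alpha>| = |im f| = |im g| = |im g / \<alpha>|\<close>, and \<open>|im f / \<alpha>| = \<parallel>\<alpha>f\<inverse>\<parallel>\<close>.
  Hence \<open>\<D>\<close> and \<open>\<J>\<close> differ only in demanding that \<open>\<alpha>\<close> separate an image \<open>A\<close> rather than
  \<open>|A / \<alpha>| = |A|\<close>. These agree for finite \<open>A\<close> (which is automatic when \<open>X / \<alpha>\<close> is finite) and
  for \<open>\<alpha> = \<Delta>\<close>; otherwise an infinite transversal \<open>R\<close> and \<open>R\<close> plus one point
  \<open>\<alpha>\<close>-equivalent to a point of \<open>R\<close> are images of \<open>\<J>\<close>-related maps that are not \<open>\<D>\<close>-related.\<close>

section \<open>Images, kernels and quotients\<close>

lemma image_lepoll_image_if_kernel_le: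
  assumes "\<And>x y. x \<in> A \<Longrightarrow> y \<in> A \<Longrightarrow> q x = q y \<Longrightarrow> p x = p y"
  shows "p ` A \<lesssim> q ` A"
proof (rule subset_image_lepoll)
  have "p x = p (inv_into A q (q x))" if "x \<in> A" for x
    using that by (intro assms) (auto simp: inv_into_into f_inv_into_f)
  then show "p ` A \<subseteq> (p \<circ> inv_into A q) ` q ` A"
    by auto
qed

lemma image_eqpoll_image_if_same_kernel:
  assumes "\<And>x y. x \<in> A \<Longrightarrow> y \<in> A \<Longrightarrow> p x = p y \<longleftrightarrow> q x = q y"
  shows "p ` A \<approx> q ` A"
  using assms by (meson image_lepoll_image_if_kernel_le lepoll_antisym)

lemma image_eqpoll_image_if_kernel_eq:
  assumes "kernel X f = kernel X g"
  shows "f ` X \<approx> g ` X"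
proof (rule image_eqpoll_image_if_same_kernel)
  fix x y assume "x \<in> X" "y \<in> X"
  then show "f x = f y \<longleftrightarrow> g x = g y"
    using assms by (auto simp: kernel_def set_eq_iff)
qed

lemma kernel_restrict_comp:
  assumes "inj_on \<psi> (g ` X)"
  shows "kernel X (restrict (\<psi> \<circ> g) X) = kernel X g"
  using assms by (auto simp: kernel_def inj_on_def)

lemma quotient_eq_image: "A // r = (\<lambda>x. r `` {x}) ` A"
  unfolding quotient_def by blast

lemma quotient_lepoll: "A // r \<lesssim> A"
  unfolding quotient_eq_image by (rule image_lepoll)

lemma quotient_mono: "A \<subseteq> B \<Longrightarrow> A // r \<subseteq> B // r"
  unfolding quotient_def by blast

lemma separates_iff_inj_on_classes:
  assumes "equiv X r" and "A \<subseteq> X"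
  shows "separates r A \<longleftrightarrow> inj_on (\<lambda>x. r `` {x}) A"
proof -
  have "r `` {x} = r `` {y} \<longleftrightarrow> (x, y) \<in> r" if "x \<in> A" "y \<in> A" for x y
    using that assms(2) by (intro eq_equiv_class_iff[OF assms(1)]) auto
  then show ?thesis
    unfolding separates_def inj_on_def by auto
qed

lemma quotient_eqpoll_if_separates:
  assumes "equiv X r" and "A \<subseteq> X" and "separates r A"
  shows "A // r \<approx> A"
  using assms(3) unfolding quotient_eq_image separates_iff_inj_on_classes[OF assms(1,2)]
  by (rule inj_on_image_eqpoll_self)

lemma separates_if_finite_quotient_eqpoll:
  assumes "equiv X r" and "A \<subseteq> X" and "finite A" and "A // r \<approx> A"
  shows "separates r A"
proof -
  have "finite (A // r)"
    using assms(3,4) eqpoll_finite_iff by blast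
  then have "card (A // r) = card A"
    using eqpoll_iff_card assms(3,4) by blast
  then have "card ((\<lambda>x. r `` {x}) ` A) = card A"
    unfolding quotient_eq_image .
  then show ?thesis
    unfolding separates_iff_inj_on_classes[OF assms(1,2)] inj_on_iff_eq_card[OF assms(3)] .
qed

lemma exists_transversal:
  assumes "equiv X r" and "A \<subseteq> X"
  obtains R where "R \<subseteq> A" and "separates r R" and "R // r = A // r"
proof -
  define rep where "rep C = (SOME y. y \<in> C \<and> y \<in> A)" for C
  have rep: "rep (r `` {a}) \<in> r `` {a} \<and> rep (r `` {a}) \<in> A" if "a \<in> A" for a
    unfolding rep_def
    by (rule someI[of _ a]) (use that equiv_class_self[OF assms(1)] assms(2) in blast)
  have class_rep: "r `` {rep (r `` {a})} = r `` {a}" if "a \<in> A" for a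
  proof -
    have "(a, rep (r `` {a})) \<in> r"
      using rep[OF that] by simp
    then show ?thesis
      by (rule equiv_class_eq[OF assms(1), symmetric])
  qed
  show ?thesis
  proof (rule that)
    show "rep ` (A // r) \<subseteq> A"
      using rep by (auto simp: quotient_eq_image)
    show "separates r (rep ` (A // r))"
      unfolding separates_def quotient_eq_image
    proof (clarsimp)
      fix a b assume "a \<in> A" "b \<in> A" "(rep (r `` {a}), rep (r `` {b})) \<in> r"
      then have "r `` {a} = r `` {b}"
        using equiv_class_eq[OF assms(1)] class_rep by metis
      then show "rep (r `` {a}) = rep (r `` {b})" by simp
    qed
    show "(rep ` (A // r)) // r = A // r"
      unfolding quotient_eq_image image_image by (intro image_cong refl class_rep)
  qed
qed

lemma lepoll_quotient_if_bounded_subset: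
  assumes "A \<subseteq> B" and "B \<lesssim> A // r"
  shows "A \<lesssim> B // r"
proof -
  have "A \<lesssim> B" using assms(1) by (rule subset_imp_lepoll)
  also have "B \<lesssim> A // r" by (fact assms(2))
  also have "A // r \<lesssim> B // r" using assms(1) by (intro subset_imp_lepoll quotient_mono)
  finally show ?thesis .
qed

text \<open>With \<open>A, B\<close> the images of \<open>f, g\<close>, the left side is \<open>f \<J> g\<close> (see \<open>in_ideal_iff\<close>).\<close>

lemma mutually_bounded_iff:
  "(A \<subseteq> B \<or> A \<lesssim> B // r) \<and> (B \<subseteq> A \<or> B \<lesssim> A // r) \<longleftrightarrow>
     A = B \<or> (A // r \<approx> A \<and> A \<approx> B \<and> B \<approx> B // r)"
proof
  assume bounds: "(A \<subseteq> B \<or> A \<lesssim> B // r) \<and> (B \<subseteq> A \<or> B \<lesssim> A // r)"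
  show "A = B \<or> (A // r \<approx> A \<and> A \<approx> B \<and> B \<approx> B // r)"
  proof (cases "A = B")
    case False
    then have AB: "A \<lesssim> B // r" and BA: "B \<lesssim> A // r"
      using bounds lepoll_quotient_if_bounded_subset by blast+
    have A: "A // r \<lesssim> A" and B: "B // r \<lesssim> B"
      by (rule quotient_lepoll)+
    have "A // r \<approx> A"
      using lepoll_trans[OF lepoll_trans[OF AB B] BA] A by (rule lepoll_antisym[rotated])
    moreover have "A \<approx> B"
      using lepoll_trans[OF AB B] lepoll_trans[OF BA A] by (rule lepoll_antisym)
    moreover have "B \<approx> B // r"
      using lepoll_trans[OF lepoll_trans[OF BA A] AB] B by (rule lepoll_antisym)
    ultimately show ?thesis by blast
  qed simp
next
  assume "A = B \<or> (A // r \<approx> A \<and> A \<approx> B \<and> B \<approx> B // r)"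
  then show "(A \<subseteq> B \<or> A \<lesssim> B // r) \<and> (B \<subseteq> A \<or> B \<lesssim> A // r)"
  proof
    assume "A // r \<approx> A \<and> A \<approx> B \<and> B \<approx> B // r"
    then have "A \<approx> B // r" "B \<approx> A // r"
      by (meson eqpoll_sym eqpoll_trans)+
    then show ?thesis by (simp add: eqpoll_imp_lepoll)
  qed simp
qed

lemma equiv_preimage_rel:
  assumes "equiv X \<alpha>" and "f \<in> X \<rightarrow> X"
  shows "equiv X (preimage_rel X \<alpha> f)"
proof -
  from assms(1) obtain "refl_on X \<alpha>" "sym \<alpha>" "trans \<alpha>"
    by (rule equivE)
  then show ?thesis
    using assms(2) unfolding preimage_rel_def
    by (intro equivI refl_onI symI transI) (auto dest: refl_onD symD transD)
qed

lemma quotient_preimage_rel_eqpoll: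
  assumes "equiv X \<alpha>" and "f \<in> X \<rightarrow> X"
  shows "X // preimage_rel X \<alpha> f \<approx> (f ` X) // \<alpha>"
proof -
  have "preimage_rel X \<alpha> f `` {x} = preimage_rel X \<alpha> f `` {y} \<longleftrightarrow> \<alpha> `` {f x} = \<alpha> `` {f y}"
    if "x \<in> X" "y \<in> X" for x y
  proof -
    have "preimage_rel X \<alpha> f `` {x} = preimage_rel X \<alpha> f `` {y} \<longleftrightarrow> (f x, f y) \<in> \<alpha>"
      using eq_equiv_class_iff[OF equiv_preimage_rel[OF assms] that] that
      by (simp add: preimage_rel_def)
    also have "\<dots> \<longleftrightarrow> \<alpha> `` {f x} = \<alpha> `` {f y}"
      using eq_equiv_class_iff[OF assms(1)] that assms(2) by (simp add: Pi_iff)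
    finally show ?thesis .
  qed
  then have "X // preimage_rel X \<alpha> f \<approx> (\<lambda>x. \<alpha> `` {f x}) ` X"
    unfolding quotient_eq_image by (rule image_eqpoll_image_if_same_kernel)
  then show ?thesis
    by (simp add: quotient_eq_image image_image)
qed

lemma kernel_subset_preimage_rel:
  assumes "equiv X \<alpha>" and "f \<in> X \<rightarrow> X"
  shows "kernel X f \<subseteq> preimage_rel X \<alpha> f"
  using assms by (auto simp: kernel_def preimage_rel_def equiv_def refl_on_def)

lemma preimage_rel_subset_kernel_iff:
  "preimage_rel X \<alpha> f \<subseteq> kernel X f \<longleftrightarrow> separates \<alpha> (f ` X)"
  by (auto simp: kernel_def preimage_rel_def separates_def)

lemma tmult_apply: "x \<in> X \<Longrightarrow> tmult X f g x = g (f x)"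
  by (simp add: tmult_def compose_def)

lemma image_tmult: "tmult X f g ` X = g ` f ` X"
  by (force simp: tmult_apply)

section \<open>The semigroup \<open>T\<^sub>X(\<alpha>)\<close>\<close>

locale equiv_transformations =
  fixes X :: "'a set" and \<alpha> :: "('a \<times> 'a) set"
  assumes X_nonempty: "X \<noteq> {}" and equiv: "equiv X \<alpha>"
begin

abbreviation T :: "('a \<Rightarrow> 'a) set" where
  "T \<equiv> TXalpha X \<alpha>"

abbreviation mult :: "('a \<Rightarrow> 'a) \<Rightarrow> ('a \<Rightarrow> 'a) \<Rightarrow> ('a \<Rightarrow> 'a)" (infixl "\<cdot>" 70) where
  "f \<cdot> g \<equiv> tmult X f g"

lemma alpha_subset: "\<alpha> \<subseteq> X \<times> X"
  using equiv by (rule equivE)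

lemma TXalpha_iff: "f \<in> T \<longleftrightarrow> f \<in> X \<rightarrow>\<^sub>E X \<and> (\<forall>x y. (x, y) \<in> \<alpha> \<longrightarrow> f x = f y)"
  using alpha_subset by (auto simp: TXalpha_def kernel_def)

lemma TXalpha_cong: "f \<in> T \<Longrightarrow> (x, y) \<in> \<alpha> \<Longrightarrow> f x = f y"
  by (simp add: TXalpha_iff)

lemma TXalpha_funcset: "f \<in> T \<Longrightarrow> f \<in> X \<rightarrow> X"
  by (simp add: TXalpha_iff PiE_iff Pi_iff)

lemma TXalpha_restrictI:
  assumes "\<And>x. x \<in> X \<Longrightarrow> h x \<in> X" and "\<And>x y. (x, y) \<in> \<alpha> \<Longrightarrow> h x = h y"
  shows "restrict h X \<in> T"
  using assms alpha_subset by (auto simp: TXalpha_iff)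

lemma TXalpha_eqI: "f \<in> T \<Longrightarrow> g \<in> T \<Longrightarrow> (\<And>x. x \<in> X \<Longrightarrow> f x = g x) \<Longrightarrow> f = g"
  by (auto simp: TXalpha_iff intro: PiE_ext)

lemma tmult_closed: "f \<in> T \<Longrightarrow> g \<in> T \<Longrightarrow> f \<cdot> g \<in> T"
  using alpha_subset unfolding TXalpha_iff by (auto simp: tmult_def compose_def PiE_iff)

lemma TXalpha_image_lepoll_quotient:
  assumes "b \<in> T" and "A \<subseteq> X"
  shows "b ` A \<lesssim> A // \<alpha>"
  unfolding quotient_eq_image
proof (rule image_lepoll_image_if_kernel_le)
  fix x y assume "x \<in> A" "y \<in> A" "\<alpha> `` {x} = \<alpha> `` {y}"
  then show "b x = b y"
    using assms eq_equiv_class_iff[OF equiv] TXalpha_cong by blast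
qed

lemma exists_TXalpha_extension:
  assumes "B \<subseteq> X" and "b ` B \<subseteq> X"
    and "\<And>y z. y \<in> B \<Longrightarrow> z \<in> B \<Longrightarrow> (y, z) \<in> \<alpha> \<Longrightarrow> b y = b z"
  obtains s where "s \<in> T" and "\<And>y. y \<in> B \<Longrightarrow> s y = b y"
proof -
  obtain x0 where "x0 \<in> X" using X_nonempty by blast
  define H where "H C = (if C \<inter> B = {} then x0 else b (SOME z. z \<in> C \<inter> B))" for C
  show ?thesis
  proof (rule that)
    show "restrict (\<lambda>y. H (\<alpha> `` {y})) X \<in> T"
    proof (rule TXalpha_restrictI)
      show "H (\<alpha> `` {y}) \<in> X" for y
        using \<open>x0 \<in> X\<close> assms(2) some_in_eq[of "\<alpha> `` {y} \<inter> B"] by (auto simp: H_def)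
      show "H (\<alpha> `` {y}) = H (\<alpha> `` {z})" if "(y, z) \<in> \<alpha>" for y z
        using equiv_class_eq[OF equiv that] by simp
    qed
    show "restrict (\<lambda>y. H (\<alpha> `` {y})) X y = b y" if "y \<in> B" for y
    proof -
      have "y \<in> \<alpha> `` {y} \<inter> B"
        using that assms(1) equiv_class_self[OF equiv] by blast
      then have "(SOME z. z \<in> \<alpha> `` {y} \<inter> B) \<in> \<alpha> `` {y} \<inter> B"
        by (rule someI)
      then have "b (SOME z. z \<in> \<alpha> `` {y} \<inter> B) = b y"
        using that assms(3) by auto
      then show ?thesis
        using \<open>y \<in> \<alpha> `` {y} \<inter> B\<close> that assms(1) by (auto simp: H_def)
    qed
  qed
qed

lemma left_factor_iff:
  assumes f: "f \<in> T" and g: "g \<in> T"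
  shows "(\<exists>s\<in>T. f = s \<cdot> g) \<longleftrightarrow> f ` X \<subseteq> g ` X"
proof
  assume "\<exists>s\<in>T. f = s \<cdot> g"
  then obtain s where "s \<in> T" "f = s \<cdot> g" by blast
  then show "f ` X \<subseteq> g ` X"
    using TXalpha_funcset by (auto simp: image_tmult)
next
  assume sub: "f ` X \<subseteq> g ` X"
  define s where "s = restrict (\<lambda>x. inv_into X g (f x)) X"
  have "s \<in> T"
    unfolding s_def using sub by (intro TXalpha_restrictI inv_into_into) (auto simp: TXalpha_cong[OF f])
  moreover have "f = s \<cdot> g"
    using sub by (intro TXalpha_eqI[OF f tmult_closed[OF \<open>s \<in> T\<close> g]])
      (auto simp: s_def tmult_apply f_inv_into_f)
  ultimately show "\<exists>s\<in>T. f = s \<cdot> g" by blast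
qed

lemma right_factor_iff:
  assumes f: "f \<in> T" and k: "k \<in> T"
  shows "(\<exists>b\<in>T. f = k \<cdot> b) \<longleftrightarrow> preimage_rel X \<alpha> k \<subseteq> kernel X f"
proof
  assume "\<exists>b\<in>T. f = k \<cdot> b"
  then obtain b where b: "b \<in> T" and fb: "f = k \<cdot> b" by blast
  show "preimage_rel X \<alpha> k \<subseteq> kernel X f"
  proof (clarsimp simp: preimage_rel_def kernel_def)
    fix x y assume "x \<in> X" "y \<in> X" "(k x, k y) \<in> \<alpha>"
    then have "b (k x) = b (k y)"
      using TXalpha_cong[OF b] by blast
    then show "f x = f y"
      using \<open>x \<in> X\<close> \<open>y \<in> X\<close> by (simp add: fb tmult_apply)
  qed
next
  assume pre: "preimage_rel X \<alpha> k \<subseteq> kernel X f"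
  have f_eq: "f x = f y" if "x \<in> X" "y \<in> X" "(k x, k y) \<in> \<alpha>" for x y
    using pre that by (auto simp: preimage_rel_def kernel_def)
  have k_inv: "inv_into X k (k x) \<in> X \<and> k (inv_into X k (k x)) = k x" if "x \<in> X" for x
    using that by (simp add: inv_into_into f_inv_into_f)
  obtain s where s: "s \<in> T" and s_k: "\<And>y. y \<in> k ` X \<Longrightarrow> s y = f (inv_into X k y)"
  proof (rule exists_TXalpha_extension)
    show "k ` X \<subseteq> X" "(\<lambda>y. f (inv_into X k y)) ` k ` X \<subseteq> X"
      using TXalpha_funcset[OF k] TXalpha_funcset[OF f] k_inv by auto
    show "f (inv_into X k y) = f (inv_into X k z)" if "y \<in> k ` X" "z \<in> k ` X" "(y, z) \<in> \<alpha>" for y z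
      using that k_inv by (intro f_eq) auto
  qed (use that in blast)
  have "f = k \<cdot> s"
  proof (rule TXalpha_eqI[OF f tmult_closed[OF k s]])
    fix x assume "x \<in> X"
    have "(k (inv_into X k (k x)), k x) \<in> \<alpha>"
      using k_inv[OF \<open>x \<in> X\<close>] TXalpha_funcset[OF k] \<open>x \<in> X\<close> equiv
      by (auto simp: equiv_def refl_on_def)
    then have "f (inv_into X k (k x)) = f x"
      using k_inv[OF \<open>x \<in> X\<close>] \<open>x \<in> X\<close> by (intro f_eq) auto
    then show "f x = (k \<cdot> s) x"
      using \<open>x \<in> X\<close> s_k by (simp add: tmult_apply)
  qed
  with s show "\<exists>b\<in>T. f = k \<cdot> b" by blast
qed

lemma exists_TXalpha_with_kernel_and_image:
  assumes g: "g \<in> T" and "g ` X \<approx> B" and "B \<subseteq> X"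
  obtains h where "h \<in> T" and "kernel X h = kernel X g" and "h ` X = B"
proof -
  obtain \<phi> where \<phi>: "bij_betw \<phi> (g ` X) B"
    using assms(2) by (auto simp: eqpoll_def)
  define h where "h = restrict (\<phi> \<circ> g) X"
  have "\<phi> (g x) \<in> X" if "x \<in> X" for x
    using bij_betw_apply[OF \<phi>, of "g x"] assms(3) that by blast
  then have "h \<in> T"
    unfolding h_def by (intro TXalpha_restrictI) (auto simp: TXalpha_cong[OF g])
  moreover have "kernel X h = kernel X g"
    unfolding h_def using \<phi> by (intro kernel_restrict_comp) (simp add: bij_betw_def)
  moreover have "h ` X = B"
    using \<phi> by (auto simp: h_def bij_betw_def)
  ultimately show ?thesis
    by (rule that)
qed

lemma exists_TXalpha_image_eq:
  assumes "B \<subseteq> X" and "B \<noteq> {}" and "B \<lesssim> X // \<alpha>"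
  obtains f where "f \<in> T" and "f ` X = B"
proof -
  obtain \<phi> where \<phi>: "B \<subseteq> \<phi> ` (X // \<alpha>)"
    using assms(3) unfolding lepoll_iff by blast
  obtain b0 where "b0 \<in> B"
    using assms(2) by blast
  define H where "H C = (if \<phi> C \<in> B then \<phi> C else b0)" for C
  have "restrict (\<lambda>x. H (\<alpha> `` {x})) X \<in> T"
  proof (rule TXalpha_restrictI)
    show "H (\<alpha> `` {x}) \<in> X" for x
      using assms(1) \<open>b0 \<in> B\<close> by (auto simp: H_def)
    show "H (\<alpha> `` {x}) = H (\<alpha> `` {y})" if "(x, y) \<in> \<alpha>" for x y
      by (simp add: equiv_class_eq[OF equiv that])
  qed
  moreover have "restrict (\<lambda>x. H (\<alpha> `` {x})) X ` X = B"
  proof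
    show "restrict (\<lambda>x. H (\<alpha> `` {x})) X ` X \<subseteq> B"
      using \<open>b0 \<in> B\<close> by (auto simp: H_def)
    show "B \<subseteq> restrict (\<lambda>x. H (\<alpha> `` {x})) X ` X"
    proof
      fix b assume "b \<in> B"
      then obtain x where "x \<in> X" "b = \<phi> (\<alpha> `` {x})"
        using \<phi> by (auto simp: quotient_eq_image)
      then show "b \<in> restrict (\<lambda>x. H (\<alpha> `` {x})) X ` X"
        using \<open>b \<in> B\<close> by (intro image_eqI[of _ _ x]) (simp_all add: H_def)
    qed
  qed
  ultimately show ?thesis
    by (rule that)
qed

section \<open>Green's relations\<close>

lemma greenL_iff:
  assumes f: "f \<in> T" and g: "g \<in> T"
  shows "greenL T (\<cdot>) f g \<longleftrightarrow> f ` X = g ` X"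
  unfolding greenL_def left_factor_iff[OF f g] left_factor_iff[OF g f] using f g by auto

lemma greenR_iff:
  assumes f: "f \<in> T" and g: "g \<in> T"
  shows "greenR T (\<cdot>) f g \<longleftrightarrow>
    f = g \<or> (kernel X f = kernel X g \<and> separates \<alpha> (f ` X) \<and> separates \<alpha> (g ` X))"
proof -
  have ker_pre: "kernel X h \<subseteq> preimage_rel X \<alpha> h" if "h \<in> T" for h
    using equiv TXalpha_funcset[OF that] by (rule kernel_subset_preimage_rel)
  have "preimage_rel X \<alpha> g \<subseteq> kernel X f \<and> preimage_rel X \<alpha> f \<subseteq> kernel X g \<longleftrightarrow>
      kernel X f = kernel X g \<and> preimage_rel X \<alpha> f \<subseteq> kernel X f \<and> preimage_rel X \<alpha> g \<subseteq> kernel X g"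
    using ker_pre[OF f] ker_pre[OF g] by blast
  then show ?thesis
    unfolding greenR_def right_factor_iff[OF f g] right_factor_iff[OF g f]
      preimage_rel_subset_kernel_iff using f g by auto
qed

lemma greenH_iff:
  assumes f: "f \<in> T" and g: "g \<in> T"
  shows "greenH T (\<cdot>) f g \<longleftrightarrow>
    f = g \<or> (kernel X f = kernel X g \<and> f ` X = g ` X \<and> separates \<alpha> (f ` X))"
  unfolding greenH_def greenL_iff[OF f g] greenR_iff[OF f g] by auto

lemma greenD_iff:
  assumes f: "f \<in> T" and g: "g \<in> T"
  shows "greenD T (\<cdot>) f g \<longleftrightarrow>
    f ` X = g ` X \<or> (f ` X \<approx> g ` X \<and> separates \<alpha> (f ` X) \<and> separates \<alpha> (g ` X))"
proof
  assume "greenD T (\<cdot>) f g"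
  then obtain h where h: "h \<in> T" and "greenL T (\<cdot>) f h" and hg: "greenR T (\<cdot>) h g"
    by (auto simp: greenD_def)
  then have fh: "f ` X = h ` X"
    using greenL_iff[OF f h] by simp
  from hg consider "h = g"
    | "kernel X h = kernel X g" "separates \<alpha> (h ` X)" "separates \<alpha> (g ` X)"
    using greenR_iff[OF h g] by blast
  then show "f ` X = g ` X \<or> (f ` X \<approx> g ` X \<and> separates \<alpha> (f ` X) \<and> separates \<alpha> (g ` X))"
  proof cases
    case 2
    then show ?thesis
      using fh image_eqpoll_image_if_kernel_eq by metis
  qed (use fh in simp)
next
  assume "f ` X = g ` X \<or> (f ` X \<approx> g ` X \<and> separates \<alpha> (f ` X) \<and> separates \<alpha> (g ` X))"
  then show "greenD T (\<cdot>) f g"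
  proof
    assume "f ` X = g ` X"
    then show ?thesis
      using f g greenL_iff[OF f g] by (auto simp: greenD_def greenR_def)
  next
    assume "f ` X \<approx> g ` X \<and> separates \<alpha> (f ` X) \<and> separates \<alpha> (g ` X)"
    then have "g ` X \<approx> f ` X" and sep: "separates \<alpha> (f ` X)" "separates \<alpha> (g ` X)"
      by (auto intro: eqpoll_sym)
    then obtain h where h: "h \<in> T" "kernel X h = kernel X g" "h ` X = f ` X"
      using TXalpha_funcset[OF f] by (elim exists_TXalpha_with_kernel_and_image[OF g]) auto
    then have "greenL T (\<cdot>) f h" "greenR T (\<cdot>) h g"
      using greenL_iff[OF f] greenR_iff[OF _ g] sep by auto
    then show ?thesis
      using h(1) by (auto simp: greenD_def)
  qed
qed

lemma lepoll_quotient_if_right_factor: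
  assumes "b \<in> T" and "k \<in> T"
  shows "(k \<cdot> b) ` X \<lesssim> (k ` X) // \<alpha>"
  unfolding image_tmult using assms(1) TXalpha_funcset[OF assms(2)]
  by (intro TXalpha_image_lepoll_quotient) auto

lemma image_subset_or_lepoll_quotient_if_in_ideal:
  assumes f: "f \<in> T" and g: "g \<in> T" and "in_ideal T (\<cdot>) f g"
  shows "f ` X \<subseteq> g ` X \<or> f ` X \<lesssim> (g ` X) // \<alpha>"
proof -
  from assms(3) consider "f = g" | a where "a \<in> T" "f = a \<cdot> g" | b where "b \<in> T" "f = g \<cdot> b"
    | a b where "a \<in> T" "b \<in> T" "f = a \<cdot> g \<cdot> b"
    unfolding in_ideal_def by blast
  then show ?thesis
  proof cases
    case (2 a)
    then show ?thesis using left_factor_iff[OF f g] by blast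
  next
    case (3 b)
    then show ?thesis using lepoll_quotient_if_right_factor[OF _ g] by blast
  next
    case (4 a b)
    have "f ` X \<lesssim> ((a \<cdot> g) ` X) // \<alpha>"
      unfolding \<open>f = a \<cdot> g \<cdot> b\<close> using 4 g by (intro lepoll_quotient_if_right_factor tmult_closed)
    also have "((a \<cdot> g) ` X) // \<alpha> \<lesssim> (g ` X) // \<alpha>"
      using 4 left_factor_iff[OF tmult_closed[OF 4(1) g] g]
      by (intro subset_imp_lepoll quotient_mono) blast
    finally show ?thesis ..
  qed simp
qed

lemma in_ideal_if_lepoll_quotient:
  assumes f: "f \<in> T" and g: "g \<in> T" and f_le: "f ` X \<lesssim> (g ` X) // \<alpha>"
  shows "in_ideal T (\<cdot>) f g"
proof -
  have "g ` X \<subseteq> X"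
    using TXalpha_funcset[OF g] by blast
  then obtain R where R: "R \<subseteq> g ` X" "separates \<alpha> R" "R // \<alpha> = (g ` X) // \<alpha>"
    by (rule exists_transversal[OF equiv])
  have "R // \<alpha> \<approx> R"
    using R \<open>g ` X \<subseteq> X\<close> by (intro quotient_eqpoll_if_separates[OF equiv]) auto
  with f_le have "f ` X \<lesssim> R"
    unfolding R(3) by (rule lepoll_trans2)
  then obtain \<psi> where \<psi>: "inj_on \<psi> (f ` X)" "\<psi> ` f ` X \<subseteq> R"
    unfolding lepoll_def by blast
  txt \<open>\<open>k = \<psi> \<circ> f\<close> has the kernel of \<open>f\<close> and an \<open>\<alpha>\<close>-separated image inside \<open>im g\<close>, so it
    is a left multiple of \<open>g\<close> through which \<open>f\<close> factors.\<close>
  define k where "k = restrict (\<psi> \<circ> f) X"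
  have k_img: "k ` X \<subseteq> R"
    using \<psi>(2) by (auto simp: k_def)
  have "\<psi> (f x) \<in> X" if "x \<in> X" for x
    using \<psi>(2) R(1) \<open>g ` X \<subseteq> X\<close> that by blast
  then have "k \<in> T"
    unfolding k_def by (intro TXalpha_restrictI) (auto simp: TXalpha_cong[OF f])
  obtain a where a: "a \<in> T" "k = a \<cdot> g"
    using left_factor_iff[OF \<open>k \<in> T\<close> g] k_img R(1) by blast
  have "separates \<alpha> (k ` X)"
    using R(2) k_img by (auto simp: separates_def)
  then have "preimage_rel X \<alpha> k \<subseteq> kernel X k"
    by (simp add: preimage_rel_subset_kernel_iff)
  also have "kernel X k = kernel X f"
    unfolding k_def using \<psi>(1) by (rule kernel_restrict_comp)
  finally obtain b where b: "b \<in> T" "f = k \<cdot> b"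
    using right_factor_iff[OF f \<open>k \<in> T\<close>] by blast
  have "f = a \<cdot> g \<cdot> b"
    using a(2) b(2) by simp
  with a(1) b(1) show ?thesis
    unfolding in_ideal_def by blast
qed

lemma in_ideal_iff:
  assumes f: "f \<in> T" and g: "g \<in> T"
  shows "in_ideal T (\<cdot>) f g \<longleftrightarrow> f ` X \<subseteq> g ` X \<or> f ` X \<lesssim> (g ` X) // \<alpha>"
proof
  assume "in_ideal T (\<cdot>) f g"
  with f g show "f ` X \<subseteq> g ` X \<or> f ` X \<lesssim> (g ` X) // \<alpha>"
    by (rule image_subset_or_lepoll_quotient_if_in_ideal)
next
  assume "f ` X \<subseteq> g ` X \<or> f ` X \<lesssim> (g ` X) // \<alpha>"
  then show "in_ideal T (\<cdot>) f g"
  proof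
    assume "f ` X \<subseteq> g ` X"
    then obtain s where "s \<in> T" "f = s \<cdot> g"
      using left_factor_iff[OF f g] by blast
    then show ?thesis
      unfolding in_ideal_def by blast
  qed (rule in_ideal_if_lepoll_quotient[OF f g])
qed

lemma greenJ_iff_quotient_image:
  assumes f: "f \<in> T" and g: "g \<in> T"
  shows "greenJ T (\<cdot>) f g \<longleftrightarrow>
    f ` X = g ` X \<or> ((f ` X) // \<alpha> \<approx> f ` X \<and> f ` X \<approx> g ` X \<and> g ` X \<approx> (g ` X) // \<alpha>)"
  unfolding greenJ_def in_ideal_iff[OF f g] in_ideal_iff[OF g f] mutually_bounded_iff
  using f g by blast

lemma greenJ_iff:
  assumes f: "f \<in> T" and g: "g \<in> T"
  shows "greenJ T (\<cdot>) f g \<longleftrightarrow>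
    f ` X = g ` X \<or> (X // preimage_rel X \<alpha> f \<approx> f ` X \<and> f ` X \<approx> g ` X
                      \<and> g ` X \<approx> X // preimage_rel X \<alpha> g)"
proof -
  have "X // preimage_rel X \<alpha> h \<approx> (h ` X) // \<alpha>" if "h \<in> T" for h
    using equiv TXalpha_funcset[OF that] by (rule quotient_preimage_rel_eqpoll)
  then have "X // preimage_rel X \<alpha> f \<approx> f ` X \<longleftrightarrow> (f ` X) // \<alpha> \<approx> f ` X"
    and "g ` X \<approx> X // preimage_rel X \<alpha> g \<longleftrightarrow> g ` X \<approx> (g ` X) // \<alpha>"
    using f g by (meson eqpoll_sym eqpoll_trans)+
  then show ?thesis
    unfolding greenJ_iff_quotient_image[OF f g] by simp
qed

section \<open>When \<open>\<D> = \<J>\<close>\<close>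

lemma separates_iff_quotient_eqpoll:
  assumes "finite (X // \<alpha>) \<or> \<alpha> = Id_on X" and f: "f \<in> T"
  shows "separates \<alpha> (f ` X) \<longleftrightarrow> (f ` X) // \<alpha> \<approx> f ` X"
proof
  assume "separates \<alpha> (f ` X)"
  then show "(f ` X) // \<alpha> \<approx> f ` X"
    using TXalpha_funcset[OF f] by (intro quotient_eqpoll_if_separates[OF equiv]) auto
next
  assume eqp: "(f ` X) // \<alpha> \<approx> f ` X"
  from assms(1) show "separates \<alpha> (f ` X)"
  proof
    assume "finite (X // \<alpha>)"
    moreover have "f ` X \<lesssim> X // \<alpha>"
      using f by (rule TXalpha_image_lepoll_quotient) simp
    ultimately have "finite (f ` X)"
      by (meson finite_surj lepoll_iff)
    then show ?thesis
      using TXalpha_funcset[OF f] eqp by (intro separates_if_finite_quotient_eqpoll[OF equiv]) auto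
  qed (simp add: separates_def Id_on_iff)
qed

lemma greenD_iff_greenJ:
  assumes "finite (X // \<alpha>) \<or> \<alpha> = Id_on X" and f: "f \<in> T" and g: "g \<in> T"
  shows "greenD T (\<cdot>) f g \<longleftrightarrow> greenJ T (\<cdot>) f g"
proof -
  have flip: "g ` X \<approx> (g ` X) // \<alpha> \<longleftrightarrow> (g ` X) // \<alpha> \<approx> g ` X"
    by (rule iffI) (erule eqpoll_sym)+
  show ?thesis
    unfolding greenD_iff[OF f g] greenJ_iff_quotient_image[OF f g]
      separates_iff_quotient_eqpoll[OF assms(1) f] separates_iff_quotient_eqpoll[OF assms(1) g]
      flip
    by blast
qed

lemma exists_distinct_related_to_transversal:
  assumes "\<alpha> \<noteq> Id_on X" and "R // \<alpha> = X // \<alpha>"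
  obtains r c where "r \<in> R" and "(r, c) \<in> \<alpha>" and "c \<noteq> r"
proof -
  have "Id_on X \<subseteq> \<alpha>"
    using equiv by (auto simp: equiv_def refl_on_def)
  then have "\<not> \<alpha> \<subseteq> Id_on X"
    using assms(1) subset_antisym[of \<alpha> "Id_on X"] by blast
  then obtain c1 c2 where c12: "(c1, c2) \<in> \<alpha>" "(c1, c2) \<notin> Id_on X"
    by auto
  have c1: "c1 \<in> X" and "c1 \<noteq> c2"
    using c12 alpha_subset by (auto simp: Id_on_iff)
  have "\<alpha> `` {c1} \<in> R // \<alpha>"
    unfolding assms(2) using c1 by (rule quotientI)
  then obtain r where r: "r \<in> R" "\<alpha> `` {r} = \<alpha> `` {c1}"
    by (auto elim: quotientE)
  have "(r, c1) \<in> \<alpha>"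
    using r(2) equiv c1 by (rule eq_equiv_class)
  moreover have "(r, c2) \<in> \<alpha>"
    using equiv \<open>(r, c1) \<in> \<alpha>\<close> c12(1) by (auto elim: equivE dest: transD)
  ultimately show ?thesis
    using that r(1) \<open>c1 \<noteq> c2\<close> by blast
qed

lemma exists_greenJ_not_greenD:
  assumes "infinite (X // \<alpha>)" and "\<alpha> \<noteq> Id_on X"
  obtains f g where "f \<in> T" and "g \<in> T" and "greenJ T (\<cdot>) f g" and "\<not> greenD T (\<cdot>) f g"
proof -
  obtain R where R: "R \<subseteq> X" "separates \<alpha> R" "R // \<alpha> = X // \<alpha>"
    by (rule exists_transversal[OF equiv order_refl])
  have R_quot: "R // \<alpha> \<approx> R"
    using R(1,2) by (rule quotient_eqpoll_if_separates[OF equiv])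
  obtain r c where r: "r \<in> R" and c: "(r, c) \<in> \<alpha>" "c \<noteq> r"
    using assms(2) R(3) by (rule exists_distinct_related_to_transversal)
  have "c \<notin> R"
    using R(2) c r by (auto simp: separates_def)
  have "c \<in> X"
    using c alpha_subset by auto
  have R_eqpoll: "R \<approx> X // \<alpha>"
    using R_quot unfolding R(3) by (rule eqpoll_sym)
  then have "infinite R"
    using assms(1) eqpoll_finite_iff by blast
  then have insert_R: "insert c R \<approx> R"
    by (rule infinite_insert_eqpoll)
  obtain g where g: "g \<in> T" "g ` X = R"
    by (rule exists_TXalpha_image_eq[of R])
      (use R(1) r eqpoll_imp_lepoll[OF R_eqpoll] in auto)
  obtain f where f: "f \<in> T" "f ` X = insert c R"
    by (rule exists_TXalpha_image_eq[of "insert c R"])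
      (use R(1) \<open>c \<in> X\<close> eqpoll_imp_lepoll[OF eqpoll_trans[OF insert_R R_eqpoll]] in auto)
  have "\<alpha> `` {c} = \<alpha> `` {r}"
    using equiv_class_eq[OF equiv c(1)] by simp
  then have "(insert c R) // \<alpha> = R // \<alpha>"
    using r by (auto simp: quotient_eq_image)
  then have "greenJ T (\<cdot>) f g"
    unfolding greenJ_iff_quotient_image[OF f(1) g(1)] f(2) g(2)
    using eqpoll_trans[OF R_quot eqpoll_sym[OF insert_R]] insert_R eqpoll_sym[OF R_quot] by simp
  moreover have "\<not> greenD T (\<cdot>) f g"
    unfolding greenD_iff[OF f(1) g(1)] f(2) g(2)
    using \<open>c \<notin> R\<close> r c by (auto simp: separates_def)
  ultimately show ?thesis
    using f(1) g(1) by (rule that[rotated 2])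
qed

lemma greenD_eq_greenJ_iff:
  "(\<forall>f\<in>T. \<forall>g\<in>T. greenD T (\<cdot>) f g \<longleftrightarrow> greenJ T (\<cdot>) f g) \<longleftrightarrow>
     finite (X // \<alpha>) \<or> \<alpha> = Id_on X"
proof
  assume DJ: "\<forall>f\<in>T. \<forall>g\<in>T. greenD T (\<cdot>) f g \<longleftrightarrow> greenJ T (\<cdot>) f g"
  show "finite (X // \<alpha>) \<or> \<alpha> = Id_on X"
  proof (rule ccontr)
    assume "\<not> (finite (X // \<alpha>) \<or> \<alpha> = Id_on X)"
    then have "infinite (X // \<alpha>)" and "\<alpha> \<noteq> Id_on X"
      by auto
    then obtain f g where "f \<in> T" "g \<in> T" "greenJ T (\<cdot>) f g" "\<not> greenD T (\<cdot>) f g"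
      by (rule exists_greenJ_not_greenD)
    with DJ show False
      by blast
  qed
qed (use greenD_iff_greenJ in blast)

end

theorem theorem5p6:
  fixes X :: "'a set" and \<alpha> :: "('a \<times> 'a) set"
  assumes "X \<noteq> {}" and "equiv X \<alpha>"
  shows "(\<forall>f\<in>TXalpha X \<alpha>. \<forall>g\<in>TXalpha X \<alpha>.
      (greenL (TXalpha X \<alpha>) (tmult X) f g \<longleftrightarrow> f ` X = g ` X)
    \<and> (greenR (TXalpha X \<alpha>) (tmult X) f g \<longleftrightarrow>
         f = g \<or> (kernel X f = kernel X g \<and> separates \<alpha> (f ` X) \<and> separates \<alpha> (g ` X)))
    \<and> (greenH (TXalpha X \<alpha>) (tmult X) f g \<longleftrightarrow>
         f = g \<or> (kernel X f = kernel X g \<and> f ` X = g ` X \<and> separates \<alpha> (f ` X)))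
    \<and> (greenD (TXalpha X \<alpha>) (tmult X) f g \<longleftrightarrow>
         f ` X = g ` X \<or> (f ` X \<approx> g ` X \<and> separates \<alpha> (f ` X) \<and> separates \<alpha> (g ` X)))
    \<and> (greenJ (TXalpha X \<alpha>) (tmult X) f g \<longleftrightarrow>
         f ` X = g ` X \<or> (X // preimage_rel X \<alpha> f \<approx> f ` X \<and> f ` X \<approx> g ` X
                            \<and> g ` X \<approx> X // preimage_rel X \<alpha> g)))
  \<and> ((\<forall>f\<in>TXalpha X \<alpha>. \<forall>g\<in>TXalpha X \<alpha>.
        greenD (TXalpha X \<alpha>) (tmult X) f g \<longleftrightarrow> greenJ (TXalpha X \<alpha>) (tmult X) f g)
     \<longleftrightarrow> (finite (X // \<alpha>) \<or> \<alpha> = Id_on X))"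
proof -
  interpret equiv_transformations X \<alpha>
    using assms by unfold_locales
  show ?thesis
    using greenD_eq_greenJ_iff
    by (simp add: greenL_iff greenR_iff greenH_iff greenD_iff greenJ_iff)
qed

end
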